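(* Let $q$ be a nonzero complex number which is not a root of unity, and let $\mu(u)=\sum_{r\ge0}\mu^{(r)}u^{-r}$, $\bar\mu(u)=\sum_{r\ge0}\bar\mu^{(r)}u^r$ be formal series with complex coefficients. If the irreducible highest weight representation $V(\mu(u);\bar\mu(u))$ of $\mathrm{Y}'_q(\mathfrak{sp}_2)$ is finite-dimensional, then both $\mu^{(0)}$ and $\bar\mu^{(0)}$ are nonzero.
   Context: $R(u,v)=(u-v)\sum_{i\ne j}E_{ii}\otimes E_{jj}+(q^{-1}u-qv)\sum_i E_{ii}\otimes E_{ii}+(q^{-1}-q)u\sum_{i>j}E_{ij}\otimes E_{ji}+(q^{-1}-q)v\sum_{i<j}E_{ij}\otimes E_{ji}$ with indices in $\{1,2\}$. $\mathrm{U}^{\rm ext}_q(\widehat{\mathfrak{gl}}_2)$ is the algebra with generators $t_{ij}^{(r)},\bar t_{ij}^{(r)}$ ($r\ge0$), $(t_{ii}^{(0)})^{-1},(\bar t_{ii}^{(0)})^{-1}$, series $t_{ij}(u)=\sum_rt_{ij}^{(r)}u^{-r}$, $\bar t_{ij}(u)=\sum_r\bar t_{ij}^{(r)}u^r$, matrices $T(u)=\sum t_{ij}(u)\otimes E_{ij}$, $\overline T(u)=\sum \bar t_{ij}(u)\otimes E_{ij}$ and relations $t_{12}^{(0)}=\bar t_{21}^{(0)}=0$, $t_{ii}^{(0)}\bar t_{ii}^{(0)}=\bar t_{ii}^{(0)}t_{ii}^{(0)}$, inverse relations, $R(u,v)T_1(u)T_2(v)=T_2(v)T_1(u)R(u,v)$,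 $R(u,v)\overline T_1(u)\overline T_2(v)=\overline T_2(v)\overline T_1(u)R(u,v)$, $R(u,v)\overline T_1(u)T_2(v)=T_2(v)\overline T_1(u)R(u,v)$. $\mathrm{Y}'_q(\mathfrak{sp}_2)$ is its subalgebra generated by the coefficients of $s_{ij}(u)=q\,t_{i1}(u)\bar t_{j2}(u^{-1})-t_{i2}(u)\bar t_{j1}(u^{-1})$ and by $(s_{12}^{(0)})^{-1}$; $\bar s_{ij}(u)=q\,\bar t_{i1}(u)t_{j2}(u^{-1})-\bar t_{i2}(u)t_{j1}(u^{-1})$. $V(\mu(u);\bar\mu(u))$ is the unique irreducible quotient of the Verma module, the quotient of $\mathrm{Y}'_q(\mathfrak{sp}_2)$ by the left ideal generated by the coefficients of $s_{11}(u)$, $s_{21}(u)-\mu(u)$ and $\bar s_{21}(u)-\bar\mu(u)$. *)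

theory Defs
  imports Complex_Main "HOL-Library.Poly_Mapping"
begin

text \<open>Words in an alphabet form a monoid under concatenation; the monoid algebra
  (finitely supported complex functions on words, with convolution product) is the
  free associative unital complex algebra on the alphabet.\<close>

datatype 'a word = Wd "'a list"

instantiation word :: (type) monoid_add
begin
fun plus_word :: "'a word \<Rightarrow> 'a word \<Rightarrow> 'a word" where
  "plus_word (Wd xs) (Wd ys) = Wd (xs @ ys)"
definition zero_word :: "'a word" where "zero_word = Wd []"
instance
proof
  fix a b c :: "'a word"
  show "a + b + c = a + (b + c)" by (cases a; cases b; cases c) simp
  show "0 + a = a" by (cases a) (simp add: zero_word_def)
  show "a + 0 = a" by (cases a) (simp add: zero_word_def)
qed
end

datatype ix = I1 | I2

fun ixn :: "ix \<Rightarrow> nat" where "ixn I1 = 1" | "ixn I2 = 2"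

text \<open>Generators: t_ij^(r), tbar_ij^(r), (t_ii^(0))^-1, (tbar_ii^(0))^-1.\<close>
datatype gen = Tg ix ix nat | TBg ix ix nat | TinvG ix | TBinvG ix

type_synonym fa = "gen word \<Rightarrow>\<^sub>0 complex"

definition gn :: "gen \<Rightarrow> fa" where "gn g = Poly_Mapping.single (Wd [g]) 1"

definition sc :: "complex \<Rightarrow> fa" where "sc c = Poly_Mapping.single 0 c"

text \<open>Coefficient of u^k (k an integer) of t_ij(u) = sum_r t_ij^(r) u^-r and of
  tbar_ij(u) = sum_r tbar_ij^(r) u^r.\<close>
definition tser :: "ix \<Rightarrow> ix \<Rightarrow> int \<Rightarrow> fa" where
  "tser i j k = (if k \<le> 0 then gn (Tg i j (nat (-k))) else 0)"
definition tbser :: "ix \<Rightarrow> ix \<Rightarrow> int \<Rightarrow> fa" where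
  "tbser i j k = (if 0 \<le> k then gn (TBg i j (nat k)) else 0)"

text \<open>The entry of R(u,v) at E_ae (x) E_bf is alpha*u + beta*v; Rent returns (alpha, beta).\<close>
definition Rent :: "complex \<Rightarrow> ix \<Rightarrow> ix \<Rightarrow> ix \<Rightarrow> ix \<Rightarrow> complex \<times> complex" where
  "Rent q a b e f =
     (if a = e \<and> b = f \<and> a = b then (inverse q, - q)
      else if a = e \<and> b = f \<and> a \<noteq> b then (1, -1)
      else if a = f \<and> b = e \<and> ixn a > ixn b then (inverse q - q, 0)
      else if a = f \<and> b = e \<and> ixn a < ixn b then (0, inverse q - q)
      else (0, 0))"

definition ixs :: "ix set" where "ixs = {I1, I2}"

text \<open>Coefficient of u^m v^n of the (a,b),(c,d) entry of
  R(u,v) X_1(u) Y_2(v) - Y_2(v) X_1(u) R(u,v).\<close>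
definition rtt :: "complex \<Rightarrow> (ix \<Rightarrow> ix \<Rightarrow> int \<Rightarrow> fa) \<Rightarrow> (ix \<Rightarrow> ix \<Rightarrow> int \<Rightarrow> fa)
    \<Rightarrow> ix \<Rightarrow> ix \<Rightarrow> ix \<Rightarrow> ix \<Rightarrow> int \<Rightarrow> int \<Rightarrow> fa" where
  "rtt q X Y a b c d m n =
     (\<Sum>e\<in>ixs. \<Sum>f\<in>ixs.
        sc (fst (Rent q a b e f)) * X e c (m - 1) * Y f d n
      + sc (snd (Rent q a b e f)) * X e c m * Y f d (n - 1))
   - (\<Sum>e\<in>ixs. \<Sum>f\<in>ixs.
        Y b f n * X a e (m - 1) * sc (fst (Rent q e f c d))
      + Y b f (n - 1) * X a e m * sc (snd (Rent q e f c d)))"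

definition rels :: "complex \<Rightarrow> fa set" where
  "rels q =
     {gn (Tg I1 I2 0), gn (TBg I2 I1 0)}
   \<union> {gn (Tg i i 0) * gn (TBg i i 0) - gn (TBg i i 0) * gn (Tg i i 0) | i. True}
   \<union> {gn (Tg i i 0) * gn (TinvG i) - 1 | i. True}
   \<union> {gn (TinvG i) * gn (Tg i i 0) - 1 | i. True}
   \<union> {gn (TBg i i 0) * gn (TBinvG i) - 1 | i. True}
   \<union> {gn (TBinvG i) * gn (TBg i i 0) - 1 | i. True}
   \<union> {rtt q tser tser a b c d m n | a b c d m n. True}
   \<union> {rtt q tbser tbser a b c d m n | a b c d m n. True}
   \<union> {rtt q tbser tser a b c d m n | a b c d m n. True}"

text \<open>The two-sided ideal generated by the relations; U^ext_q(gl_2-hat) = fa / Rel q.\<close>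
definition Rel :: "complex \<Rightarrow> fa set" where
  "Rel q = \<Inter>{J. rels q \<subseteq> J \<and> 0 \<in> J \<and> (\<forall>x\<in>J. \<forall>y\<in>J. x + y \<in> J)
                 \<and> (\<forall>x\<in>J. \<forall>a b. a * x * b \<in> J)}"

text \<open>s_ij(u) = sum_k s_ij^(k) u^-k and sbar_ij(u) = sum_k sbar_ij^(k) u^k.\<close>
definition scoef :: "complex \<Rightarrow> ix \<Rightarrow> ix \<Rightarrow> nat \<Rightarrow> fa" where
  "scoef q i j k = (\<Sum>r\<le>k. sc q * gn (Tg i I1 r) * gn (TBg j I2 (k - r))
                            - gn (Tg i I2 r) * gn (TBg j I1 (k - r)))"
definition sbcoef :: "complex \<Rightarrow> ix \<Rightarrow> ix \<Rightarrow> nat \<Rightarrow> fa" where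
  "sbcoef q i j k = (\<Sum>r\<le>k. sc q * gn (TBg i I1 r) * gn (Tg j I2 (k - r))
                             - gn (TBg i I2 r) * gn (Tg j I1 (k - r)))"

text \<open>Preimage in fa of Y'_q(sp_2): the smallest subalgebra containing Rel q, the
  coefficients of s_ij(u), and the (representatives of the) inverse of s_12^(0).\<close>
definition Yp :: "complex \<Rightarrow> fa set" where
  "Yp q = \<Inter>{S. Rel q \<subseteq> S \<and> (\<forall>i j k. scoef q i j k \<in> S)
              \<and> {x. x * scoef q I1 I2 0 - 1 \<in> Rel q \<and> scoef q I1 I2 0 * x - 1 \<in> Rel q} \<subseteq> S
              \<and> 1 \<in> S \<and> (\<forall>c. \<forall>x\<in>S. sc c * x \<in> S)
              \<and> (\<forall>x\<in>S. \<forall>y\<in>S. x + y \<in> S) \<and> (\<forall>x\<in>S. \<forall>y\<in>S. x * y \<in> S)}"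

text \<open>Preimages in fa of left ideals of Y'_q(sp_2).\<close>
definition lideal :: "complex \<Rightarrow> fa set \<Rightarrow> bool" where
  "lideal q J \<longleftrightarrow> Rel q \<subseteq> J \<and> J \<subseteq> Yp q \<and> (\<forall>x\<in>J. \<forall>y\<in>J. x + y \<in> J)
                   \<and> (\<forall>a\<in>Yp q. \<forall>x\<in>J. a * x \<in> J)"

text \<open>Generators of the left ideal defining the Verma module.\<close>
definition verma_gens :: "complex \<Rightarrow> (nat \<Rightarrow> complex) \<Rightarrow> (nat \<Rightarrow> complex) \<Rightarrow> fa set" where
  "verma_gens q mu mub =
     {scoef q I1 I1 k | k. True}
   \<union> {scoef q I2 I1 k - sc (mu k) | k. True}
   \<union> {sbcoef q I2 I1 k - sc (mub k) | k. True}"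

text \<open>J (the preimage of) a maximal proper left ideal of Y' containing the Verma ideal,
  so that Y'/J = V(mu(u); mubar(u)) (the irreducible quotient of the Verma module).\<close>
definition irr_ideal :: "complex \<Rightarrow> (nat \<Rightarrow> complex) \<Rightarrow> (nat \<Rightarrow> complex) \<Rightarrow> fa set \<Rightarrow> bool" where
  "irr_ideal q mu mub J \<longleftrightarrow> lideal q J \<and> verma_gens q mu mub \<subseteq> J \<and> J \<noteq> Yp q
     \<and> (\<forall>K. lideal q K \<and> J \<subseteq> K \<longrightarrow> K = J \<or> K = Yp q)"

definition fin_dim_quot :: "complex \<Rightarrow> fa set \<Rightarrow> bool" where
  "fin_dim_quot q J \<longleftrightarrow> (\<exists>F. finite F \<and> F \<subseteq> Yp q \<and>
      (\<forall>y\<in>Yp q. \<exists>c. y - (\<Sum>f\<in>F. sc (c f) * f) \<in> J))"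

end

theory Submission
  imports Defs
begin

text \<open>In V = Y'/J the class of 1 is a highest weight vector: s11^(0) kills it, s21^(0) and
  sbar21^(0) act on it by mu^(0) and mubar^(0). A degree-zero RTT relation gives
  sbar21^(0) = -q^-1 s12^(0), and s12^(0) is invertible, so s12^(0) acts on 1 by the nonzero
  scalar b = -q mubar^(0). If mu^(0) = 0, the commutation relations of s22^(0) with s11^(0),
  s12^(0) and s21^(0) make the vectors s22^(0)^k 1 eigenvectors of s12^(0) with eigenvalues
  b q^-2k, pairwise distinct since q is not a root of unity, and nonzero since s11^(0) maps
  s22^(0)^(k+1) 1 to a nonzero multiple of s22^(0)^k 1. So V would be infinite-dimensional.\<close>

abbreviation t0 :: "ix \<Rightarrow> ix \<Rightarrow> fa"
  where "t0 i j \<equiv> gn (Tg i j 0)"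
abbreviation tb0 :: "ix \<Rightarrow> ix \<Rightarrow> fa"
  where "tb0 i j \<equiv> gn (TBg i j 0)"
abbreviation s0 :: "complex \<Rightarrow> ix \<Rightarrow> ix \<Rightarrow> fa"
  where "s0 q i j \<equiv> scoef q i j 0"
abbreviation sb0 :: "complex \<Rightarrow> ix \<Rightarrow> ix \<Rightarrow> fa"
  where "sb0 q i j \<equiv> sbcoef q i j 0"

lemma lookup_mult_sc: "Poly_Mapping.lookup (p * sc c) w = Poly_Mapping.lookup p w * c"
proof -
  have "(\<Sum>v. (c when v = 0) when w = u + v) = (c when w = u)" for u
    by (subst Sum_any.cong[where h = "\<lambda>v. if v = 0 then (c when w = u) else 0"])
       (auto simp: when_def)
  then show ?thesis
    by (simp add: sc_def lookup_mult lookup_single mult_when)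
qed

lemma sc_commute: "x * sc c = sc c * x"
proof (rule poly_mapping_eqI)
  fix w
  show "Poly_Mapping.lookup (x * sc c) w = Poly_Mapping.lookup (sc c * x) w"
    using lookup_mult_sc[of x c w]
    by (simp add: sc_def mult_map_scale_conv_mult[symmetric] map.rep_eq when_def mult.commute)
qed

lemma sc_left_commute: "x * (sc c * y) = sc c * (x * y)"
  by (metis sc_commute mult.assoc)

lemma sc_mult: "sc a * sc b = sc (a * b)"
  by (simp add: sc_def mult_single)

lemma sc_mult_assoc: "sc a * (sc b * x) = sc (a * b) * x"
  by (simp add: sc_mult mult.assoc[symmetric])

lemma sc_add: "sc (a + b) = sc a + sc b"
  by (simp add: sc_def single_add)

lemma sc_diff: "sc (a - b) = sc a - sc b"
  by (simp add: sc_def single_diff)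

lemma sc_0 [simp]: "sc 0 = 0"
  by (simp add: sc_def)

lemma sc_1 [simp]: "sc 1 = 1"
  by (simp add: sc_def)

lemma sc_uminus: "sc (- a) = - sc a"
  by (simp add: sc_def single_uminus)

lemma sc_sum: "sc (sum f S) = (\<Sum>x\<in>S. sc (f x))"
  by (induction S rule: infinite_finite_induct) (auto simp: sc_add)

lemma Rel_add: "x \<in> Rel q \<Longrightarrow> y \<in> Rel q \<Longrightarrow> x + y \<in> Rel q"
  unfolding Rel_def by simp

lemma Rel_mult: "x \<in> Rel q \<Longrightarrow> a * x * b \<in> Rel q"
  unfolding Rel_def by simp

lemma Rel_mult_left: "x \<in> Rel q \<Longrightarrow> a * x \<in> Rel q"
  using Rel_mult[of x q a 1] by simp

lemma Rel_mult_right: "x \<in> Rel q \<Longrightarrow> x * b \<in> Rel q"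
  using Rel_mult[of x q 1 b] by simp

lemma rels_subset_Rel: "rels q \<subseteq> Rel q"
  unfolding Rel_def by blast

lemma rtt_in_Rel:
  "rtt q tser tser a b c d m n \<in> Rel q"
  "rtt q tbser tbser a b c d m n \<in> Rel q"
  "rtt q tbser tser a b c d m n \<in> Rel q"
  by (rule rels_subset_Rel[THEN subsetD], unfold rels_def, blast)+

lemma vanishing_generators_in_Rel: "t0 I1 I2 \<in> Rel q" "tb0 I2 I1 \<in> Rel q"
  by (rule rels_subset_Rel[THEN subsetD], simp add: rels_def)+

lemma inverse_relations_in_Rel:
  "gn (Tg i i 0) * gn (TinvG i) - 1 \<in> Rel q"
  "gn (TinvG i) * gn (Tg i i 0) - 1 \<in> Rel q"
  "gn (TBg i i 0) * gn (TBinvG i) - 1 \<in> Rel q"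
  "gn (TBinvG i) * gn (TBg i i 0) - 1 \<in> Rel q"
  by (rule rels_subset_Rel[THEN subsetD], unfold rels_def, auto)+

lemmas defining_relations_in_Rel = rtt_in_Rel vanishing_generators_in_Rel inverse_relations_in_Rel

text \<open>Since t12^(0) = 0, s12^(0) = q t11^(0) tbar22^(0) in U^ext, with inverse
  q^-1 tbar22^(0)^-1 t11^(0)^-1.\<close>
definition s12_inv :: "complex \<Rightarrow> fa" where
  "s12_inv q = sc (inverse q) * gn (TBinvG I2) * gn (TinvG I1)"

text \<open>Each relation among the s-coefficients below is exhibited as an explicit two-sided
  combination of defining relations; the identity is checked coefficientwise on words.\<close>

lemma sb21_s12_relation:
  assumes "q \<noteq> 0"
  shows "sb0 q I2 I1 + sc (inverse q) * s0 q I1 I2 \<in> Rel q" (is "?r \<in> _")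
proof -
  have "?r = sc q * tb0 I2 I1 * t0 I1 I2
      + rtt q tbser tser I2 I1 I2 I1 0 1
      + sc (- q) * t0 I1 I2 * tb0 I2 I1"
    using assms
    unfolding scoef_def sbcoef_def rtt_def ixs_def Rent_def tser_def tbser_def gn_def sc_def
    by (rule_tac poly_mapping_eqI)
       (simp add: mult_single zero_word_def algebra_simps lookup_add lookup_minus lookup_single
          when_def field_simps eval_nat_numeral split: if_split)
  also have "\<dots> \<in> Rel q"
    by (intro Rel_add; blast intro: Rel_mult_left Rel_mult_right defining_relations_in_Rel)
  finally show ?thesis .
qed

lemma s12_s22_relation:
  assumes "q \<noteq> 0"
  shows "s0 q I1 I2 * s0 q I2 I2 - sc (inverse q ^ 2) * (s0 q I2 I2 * s0 q I1 I2) \<in> Rel q"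
    (is "?r \<in> _")
proof -
  have "?r = sc (- q) * t0 I1 I1 * rtt q tbser tser I2 I2 I2 I1 0 1 * tb0 I2 I2
      + sc (- q) * (t0 I1 I1 * tb0 I2 I2 * t0 I2 I2) * tb0 I2 I1
      + sc (- q) * t0 I1 I2 * (tb0 I2 I1 * t0 I2 I1 * tb0 I2 I2)
      + t0 I1 I2 * (tb0 I2 I1 * t0 I2 I2 * tb0 I2 I1)
      + t0 I2 I1 * rtt q tbser tser I2 I1 I2 I1 0 1 * tb0 I2 I2
      + sc (inverse q) * (t0 I2 I1 * tb0 I2 I2) * t0 I1 I2 * tb0 I2 I1
      + sc (inverse q) * t0 I2 I2 * tb0 I2 I1 * (t0 I1 I1 * tb0 I2 I2)
      + sc (- (inverse q ^ 2)) * t0 I2 I2 * tb0 I2 I1 * (t0 I1 I2 * tb0 I2 I1)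
      + sc (q ^ 2 - 1) * (t0 I1 I1 * t0 I2 I2) * tb0 I2 I1 * tb0 I2 I2
      + sc (inverse q - q) * t0 I2 I1 * t0 I1 I2 * (tb0 I2 I1 * tb0 I2 I2)
      + sc q * rtt q tser tser I1 I2 I1 I1 1 0 * (tb0 I2 I2 * tb0 I2 I2)"
    using assms
    unfolding scoef_def sbcoef_def rtt_def ixs_def Rent_def tser_def tbser_def gn_def sc_def
    by (rule_tac poly_mapping_eqI)
       (simp add: mult_single zero_word_def algebra_simps lookup_add lookup_minus lookup_single
          when_def field_simps eval_nat_numeral split: if_split)
  also have "\<dots> \<in> Rel q"
    by (intro Rel_add; blast intro: Rel_mult_left Rel_mult_right defining_relations_in_Rel)
  finally show ?thesis .
qed

lemma s21_s22_relation:
  assumes "q \<noteq> 0"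
  shows "s0 q I2 I1 * s0 q I2 I2 - s0 q I2 I2 * s0 q I2 I1
      - sc (inverse q - q) * (s0 q I2 I2 * s0 q I1 I2) \<in> Rel q" (is "?r \<in> _")
proof -
  have "?r = sc (- (q ^ 2)) * t0 I2 I1 * rtt q tbser tser I1 I2 I2 I1 0 1 * tb0 I2 I2
      + sc (- q) * (t0 I2 I1 * tb0 I1 I2 * t0 I2 I2) * tb0 I2 I1
      + sc q * t0 I2 I2 * rtt q tbser tser I1 I2 I1 I1 0 1 * tb0 I2 I2
      + (t0 I2 I2 * tb0 I1 I1 * t0 I2 I2) * tb0 I2 I1
      + sc q * t0 I2 I1 * rtt q tbser tser I2 I2 I2 I1 0 1 * tb0 I1 I2
      + sc (- 1) * t0 I2 I1 * rtt q tbser tser I2 I2 I2 I2 0 1 * tb0 I1 I1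
      + sc q * t0 I2 I2 * tb0 I2 I1 * (t0 I2 I1 * tb0 I1 I2)
      + sc (- 1) * t0 I2 I2 * tb0 I2 I1 * (t0 I2 I2 * tb0 I1 I1)
      + sc (1 - q ^ 2) * (t0 I2 I1 * tb0 I2 I2) * t0 I1 I2 * tb0 I2 I1
      + sc (q - inverse q) * t0 I2 I2 * tb0 I2 I1 * (t0 I1 I2 * tb0 I2 I1)
      + sc (q ^ 2) * rtt q tser tser I2 I2 I1 I2 1 0 * (tb0 I1 I1 * tb0 I2 I2)
      + sc (q ^ 2) * (t0 I2 I1 * t0 I2 I1) * rtt q tbser tbser I1 I2 I2 I2 1 0
      + sc (- q) * (t0 I2 I1 * t0 I2 I2) * rtt q tbser tbser I1 I2 I1 I2 1 0"
    using assms
    unfolding scoef_def sbcoef_def rtt_def ixs_def Rent_def tser_def tbser_def gn_def sc_def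
    by (rule_tac poly_mapping_eqI)
       (simp add: mult_single zero_word_def algebra_simps lookup_add lookup_minus lookup_single
          when_def field_simps eval_nat_numeral split: if_split)
  also have "\<dots> \<in> Rel q"
    by (intro Rel_add; blast intro: Rel_mult_left Rel_mult_right defining_relations_in_Rel)
  finally show ?thesis .
qed

lemma s11_s22_relation:
  assumes "q \<noteq> 0"
  shows "s0 q I1 I1 * s0 q I2 I2 - s0 q I2 I2 * s0 q I1 I1
      - sc (1 - q ^ 2) * (s0 q I2 I1 * s0 q I1 I2 + sc (inverse q) * (s0 q I1 I2 * s0 q I1 I2))
      \<in> Rel q" (is "?r \<in> _")
proof -
  have "?r = sc (- (q ^ 2)) * t0 I1 I1 * rtt q tbser tser I1 I2 I2 I1 0 1 * tb0 I2 I2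
      + sc (- q) * (t0 I1 I1 * tb0 I1 I2 * t0 I2 I2) * tb0 I2 I1
      + sc (- q) * t0 I1 I2 * (tb0 I1 I1 * t0 I2 I1 * tb0 I2 I2)
      + t0 I1 I2 * (tb0 I1 I1 * t0 I2 I2 * tb0 I2 I1)
      + sc (q ^ 2) * t0 I2 I1 * rtt q tbser tser I2 I1 I2 I1 0 1 * tb0 I1 I2
      + sc q * (t0 I2 I1 * tb0 I2 I2) * t0 I1 I2 * tb0 I1 I1
      + sc q * t0 I2 I2 * tb0 I2 I1 * (t0 I1 I1 * tb0 I1 I2)
      + sc (- 1) * t0 I2 I2 * tb0 I2 I1 * (t0 I1 I2 * tb0 I1 I1)
      + sc (q - q ^ 3) * t0 I2 I1 * rtt q tbser tser I1 I1 I2 I1 0 1 * tb0 I2 I2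
      + sc (q - q ^ 3) * (t0 I2 I1 * tb0 I1 I2) * t0 I1 I2 * tb0 I2 I1
      + sc (q ^ 2 - 1) * t0 I2 I2 * rtt q tbser tser I1 I1 I1 I1 0 1 * tb0 I2 I2
      + sc (q ^ 2 - 1) * (t0 I2 I2 * tb0 I1 I1) * t0 I1 I2 * tb0 I2 I1
      + sc (1 - q ^ 2) * (t0 I1 I1 * tb0 I2 I2) * t0 I1 I2 * tb0 I2 I1
      + sc (1 - q ^ 2) * t0 I1 I2 * (tb0 I2 I1 * t0 I1 I1 * tb0 I2 I2)
      + sc (q - inverse q) * t0 I1 I2 * (tb0 I2 I1 * t0 I1 I2 * tb0 I2 I1)
      + sc (q - q ^ 3) * t0 I2 I1 * t0 I1 I2 * (tb0 I2 I1 * tb0 I1 I2)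
      + sc (q ^ 3) * rtt q tser tser I1 I2 I1 I1 1 0 * (tb0 I2 I2 * tb0 I1 I2)
      + sc (q ^ 2 - q ^ 4) * rtt q tser tser I1 I2 I1 I1 1 0 * (tb0 I1 I2 * tb0 I2 I2)
      + sc (q ^ 3 - q) * rtt q tser tser I1 I2 I1 I2 1 0 * (tb0 I1 I1 * tb0 I2 I2)
      + sc (q ^ 4) * (t0 I1 I1 * t0 I2 I1) * rtt q tbser tbser I1 I2 I2 I2 1 0"
    using assms
    unfolding scoef_def sbcoef_def rtt_def ixs_def Rent_def tser_def tbser_def gn_def sc_def
    by (rule_tac poly_mapping_eqI)
       (simp add: mult_single zero_word_def algebra_simps lookup_add lookup_minus lookup_single
          when_def field_simps eval_nat_numeral split: if_split)
  also have "\<dots> \<in> Rel q"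
    by (intro Rel_add; blast intro: Rel_mult_left Rel_mult_right defining_relations_in_Rel)
  finally show ?thesis .
qed

lemma s12_inv_mult:
  assumes "q \<noteq> 0"
  shows "s12_inv q * s0 q I1 I2 - 1 \<in> Rel q" (is "?r \<in> _")
proof -
  have "?r = gn (TBinvG I2) * (gn (TinvG I1) * t0 I1 I1 - 1) * tb0 I2 I2
      + (gn (TBinvG I2) * tb0 I2 I2 - 1)
      + sc (- inverse q) * gn (TBinvG I2) * gn (TinvG I1) * t0 I1 I2 * tb0 I2 I1"
    using assms unfolding s12_inv_def scoef_def gn_def sc_def
    by (rule_tac poly_mapping_eqI)
       (simp add: mult_single zero_word_def algebra_simps lookup_add lookup_minus lookup_single
          when_def field_simps eval_nat_numeral split: if_split)
  also have "\<dots> \<in> Rel q"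
    by (intro Rel_add; blast intro: Rel_mult_left Rel_mult_right defining_relations_in_Rel)
  finally show ?thesis .
qed

lemma mult_s12_inv:
  assumes "q \<noteq> 0"
  shows "s0 q I1 I2 * s12_inv q - 1 \<in> Rel q" (is "?r \<in> _")
proof -
  have "?r = t0 I1 I1 * (tb0 I2 I2 * gn (TBinvG I2) - 1) * gn (TinvG I1)
      + (t0 I1 I1 * gn (TinvG I1) - 1)
      + sc (- inverse q) * t0 I1 I2 * (tb0 I2 I1 * gn (TBinvG I2) * gn (TinvG I1))"
    using assms unfolding s12_inv_def scoef_def gn_def sc_def
    by (rule_tac poly_mapping_eqI)
       (simp add: mult_single zero_word_def algebra_simps lookup_add lookup_minus lookup_single
          when_def field_simps eval_nat_numeral split: if_split)
  also have "\<dots> \<in> Rel q"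
    by (intro Rel_add; blast intro: Rel_mult_left Rel_mult_right defining_relations_in_Rel)
  finally show ?thesis .
qed

lemma scoef_in_Yp: "scoef q i j k \<in> Yp q"
  unfolding Yp_def by blast

lemma one_in_Yp: "1 \<in> Yp q"
  unfolding Yp_def by blast

lemma sc_mult_in_Yp: "x \<in> Yp q \<Longrightarrow> sc c * x \<in> Yp q"
  unfolding Yp_def by blast

lemma add_in_Yp: "x \<in> Yp q \<Longrightarrow> y \<in> Yp q \<Longrightarrow> x + y \<in> Yp q"
  unfolding Yp_def by blast

lemma mult_in_Yp: "x \<in> Yp q \<Longrightarrow> y \<in> Yp q \<Longrightarrow> x * y \<in> Yp q"
  unfolding Yp_def by blast

lemma sc_in_Yp: "sc c \<in> Yp q"
  using sc_mult_in_Yp[OF one_in_Yp] by simp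

lemma diff_in_Yp: "x \<in> Yp q \<Longrightarrow> y \<in> Yp q \<Longrightarrow> x - y \<in> Yp q"
  using add_in_Yp[OF _ sc_mult_in_Yp[of y q "-1"], of x] by (simp add: sc_uminus)

lemma power_in_Yp: "x \<in> Yp q \<Longrightarrow> x ^ n \<in> Yp q"
  by (induction n) (auto intro: one_in_Yp mult_in_Yp)

lemma s12_inv_in_Yp: "q \<noteq> 0 \<Longrightarrow> s12_inv q \<in> Yp q"
  using s12_inv_mult mult_s12_inv unfolding Yp_def by blast

lemma exists_nontrivial_vanishing_combination:
  fixes M :: "'i \<Rightarrow> 'a \<Rightarrow> 'b::field"
  assumes "finite F"
  shows "finite S \<Longrightarrow> card F < card S \<Longrightarrow>
    \<exists>c. (\<exists>k\<in>S. c k \<noteq> 0) \<and> (\<forall>f\<in>F. (\<Sum>k\<in>S. c k * M k f) = 0)"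
  using assms
proof (induction F arbitrary: S M rule: finite_induct)
  case empty
  then obtain k where "k \<in> S" by (metis card.empty card_gt_0_iff ex_in_conv)
  then show ?case by (rule_tac x="\<lambda>_. 1" in exI) auto
next
  case (insert g F)
  show ?case
  proof (cases "\<forall>k\<in>S. M k g = 0")
    case True
    have "card F < card S" using insert by simp
    from insert.IH[OF insert.prems(1) this] obtain c where
      "\<exists>k\<in>S. c k \<noteq> 0" "\<forall>f\<in>F. (\<Sum>k\<in>S. c k * M k f) = 0" by blast
    then show ?thesis using True by (rule_tac x=c in exI) auto
  next
    case False
    then obtain k0 where k0: "k0 \<in> S" "M k0 g \<noteq> 0" by blast
    \<comment> \<open>Gaussian elimination: clear the g-coordinate using the vector k0.\<close>
    define S' where "S' = S - {k0}"
    define M' where "M' k f = M k f - (M k g / M k0 g) * M k0 f" for k f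
    have "finite S'" using insert S'_def by simp
    moreover have "card F < card S'" using insert k0 S'_def by (simp add: card_Diff_singleton)
    ultimately obtain c' where
      c': "\<exists>k\<in>S'. c' k \<noteq> 0" "\<forall>f\<in>F. (\<Sum>k\<in>S'. c' k * M' k f) = 0"
      using insert.IH by blast
    define c where "c k = (if k = k0 then - (\<Sum>j\<in>S'. c' j * M j g) / M k0 g else c' k)" for k
    have split: "(\<Sum>k\<in>S. c k * M k f) = c k0 * M k0 f + (\<Sum>k\<in>S'. c' k * M k f)" for f
    proof -
      have "(\<Sum>k\<in>S. c k * M k f) = c k0 * M k0 f + (\<Sum>k\<in>S'. c k * M k f)"
        unfolding S'_def using insert.prems(1) k0(1) by (rule sum.remove)
      also have "(\<Sum>k\<in>S'. c k * M k f) = (\<Sum>k\<in>S'. c' k * M k f)"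
        by (rule sum.cong) (auto simp: c_def S'_def)
      finally show ?thesis .
    qed
    have "(\<Sum>k\<in>S. c k * M k f) = 0" if f: "f \<in> insert g F" for f
    proof (cases "f = g")
      case True
      then show ?thesis unfolding split using k0 by (simp add: c_def)
    next
      case False
      then have "(\<Sum>k\<in>S'. c' k * M' k f) = 0" using c' f by blast
      then have "(\<Sum>k\<in>S'. c' k * M k f) - (\<Sum>k\<in>S'. c' k * M k g) / M k0 g * M k0 f = 0"
        unfolding M'_def
        by (simp add: algebra_simps sum_subtractf sum_distrib_left sum_divide_distrib sum_distrib_right)
      then show ?thesis unfolding split using k0 by (simp add: c_def field_simps)
    qed
    moreover have "\<exists>k\<in>S. c k \<noteq> 0" using c' by (auto simp: c_def S'_def)
    ultimately show ?thesis by blast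
  qed
qed

locale proper_left_ideal =
  fixes q :: complex and J :: "fa set"
  assumes lideal: "lideal q J" and proper: "J \<noteq> Yp q"
begin

lemma Rel_in_J: "x \<in> Rel q \<Longrightarrow> x \<in> J"
  using lideal unfolding lideal_def by blast

lemma J_subset_Yp: "J \<subseteq> Yp q"
  using lideal unfolding lideal_def by blast

lemma add_in_J: "x \<in> J \<Longrightarrow> y \<in> J \<Longrightarrow> x + y \<in> J"
  using lideal unfolding lideal_def by blast

lemma mult_in_J: "a \<in> Yp q \<Longrightarrow> x \<in> J \<Longrightarrow> a * x \<in> J"
  using lideal unfolding lideal_def by blast

lemma Rel_mult_in_J: "x \<in> Rel q \<Longrightarrow> x * b \<in> J"
  by (intro Rel_in_J Rel_mult_right)

lemma zero_in_J: "0 \<in> J"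
  using Rel_in_J Rel_mult_left[OF vanishing_generators_in_Rel(1), of 0] by simp

lemma sc_mult_in_J: "x \<in> J \<Longrightarrow> sc c * x \<in> J"
  by (rule mult_in_J[OF sc_in_Yp])

lemma diff_in_J: "x \<in> J \<Longrightarrow> y \<in> J \<Longrightarrow> x - y \<in> J"
  using add_in_J[OF _ sc_mult_in_J[of y "-1"], of x] by (simp add: sc_uminus)

lemma sum_in_J: "finite S \<Longrightarrow> (\<And>k. k \<in> S \<Longrightarrow> f k \<in> J) \<Longrightarrow> sum f S \<in> J"
  by (induction S rule: finite_induct) (auto intro: zero_in_J add_in_J)

lemma one_notin_J: "1 \<notin> J"
proof
  assume "1 \<in> J"
  then have "Yp q \<subseteq> J" using mult_in_J[of _ 1] by auto
  then show False using proper J_subset_Yp by blast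
qed

lemma sc_mult_in_J_cancel: "c \<noteq> 0 \<Longrightarrow> sc c * x \<in> J \<Longrightarrow> x \<in> J"
  using sc_mult_in_J[of "sc c * x" "inverse c"] by (simp add: sc_mult_assoc)

lemma s12_weight_nonzero:
  assumes "q \<noteq> 0" and "s0 q I1 I2 - sc b \<in> J"
  shows "b \<noteq> 0"
proof
  assume "b = 0"
  then have "s12_inv q * s0 q I1 I2 \<in> J"
    using assms mult_in_J[OF s12_inv_in_Yp] by simp
  moreover have "s12_inv q * s0 q I1 I2 - 1 \<in> J"
    using assms(1) by (intro Rel_in_J s12_inv_mult)
  ultimately have "s12_inv q * s0 q I1 I2 - (s12_inv q * s0 q I1 I2 - 1) \<in> J"
    by (rule diff_in_J)
  then show False using one_notin_J by simp
qed

lemma s12_weight_of_verma: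
  assumes "q \<noteq> 0" and "verma_gens q mu mub \<subseteq> J"
  shows "s0 q I1 I2 - sc (- q * mub 0) \<in> J"
proof -
  have "sb0 q I2 I1 + sc (inverse q) * s0 q I1 I2 \<in> J"
    using assms(1) by (intro Rel_in_J sb21_s12_relation)
  moreover have "sb0 q I2 I1 - sc (mub 0) \<in> J"
    using assms(2) unfolding verma_gens_def by blast
  ultimately have "sc q * (sb0 q I2 I1 + sc (inverse q) * s0 q I1 I2)
      - sc q * (sb0 q I2 I1 - sc (mub 0)) \<in> J"
    by (blast intro: diff_in_J sc_mult_in_J)
  then show ?thesis
    using assms(1) by (simp add: algebra_simps sc_mult_assoc sc_mult sc_uminus)
qed

lemma eigenvectors_independent:
  assumes B: "B \<in> Yp q"
    and notin: "\<And>k. v k \<notin> J"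
    and eigen: "\<And>k. B * v k - sc (\<beta> k) * v k \<in> J"
    and inj: "inj \<beta>"
  shows "finite S \<Longrightarrow> (\<Sum>k\<in>S. sc (c k) * v k) \<in> J \<Longrightarrow> \<forall>k\<in>S. c k = 0"
proof (induction S arbitrary: c rule: finite_induct)
  case empty
  then show ?case by simp
next
  case (insert j S)
  \<comment> \<open>Applying B - \<beta> j kills the j-th summand and rescales the others by \<beta> k - \<beta> j.\<close>
  define c' where "c' k = c k * (\<beta> k - \<beta> j)" for k
  have apply_B: "(B - sc (\<beta> j)) * (sc (c k) * v k)
      = sc (c k) * (B * v k - sc (\<beta> k) * v k) + sc (c' k) * v k" for k
    by (simp add: c'_def algebra_simps sc_left_commute[of B] sc_mult_assoc sc_diff)
  have "(B - sc (\<beta> j)) * (\<Sum>k\<in>insert j S. sc (c k) * v k) \<in> J"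
    by (rule mult_in_J[OF diff_in_Yp[OF B sc_in_Yp] insert.prems])
  also have "(B - sc (\<beta> j)) * (\<Sum>k\<in>insert j S. sc (c k) * v k)
      = (\<Sum>k\<in>insert j S. sc (c k) * (B * v k - sc (\<beta> k) * v k))
        + (\<Sum>k\<in>insert j S. sc (c' k) * v k)"
    by (simp only: sum_distrib_left apply_B sum.distrib)
  also have "(\<Sum>k\<in>insert j S. sc (c' k) * v k) = (\<Sum>k\<in>S. sc (c' k) * v k)"
    using insert.hyps by (simp add: c'_def)
  finally have "(\<Sum>k\<in>insert j S. sc (c k) * (B * v k - sc (\<beta> k) * v k))
      + (\<Sum>k\<in>S. sc (c' k) * v k) \<in> J" (is "?eigen_part + ?rest \<in> J") .
  moreover have "?eigen_part \<in> J"
    using insert.hyps by (intro sum_in_J sc_mult_in_J eigen) auto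
  ultimately have "?eigen_part + ?rest - ?eigen_part \<in> J"
    by (rule diff_in_J)
  then have "\<forall>k\<in>S. c' k = 0" by (intro insert.IH) simp
  moreover have "\<beta> k \<noteq> \<beta> j" if "k \<in> S" for k
    using that insert.hyps inj by (auto dest: injD)
  ultimately have c_S: "\<forall>k\<in>S. c k = 0" by (simp add: c'_def)
  then have "(\<Sum>k\<in>S. sc (c k) * v k) = 0"
    by (intro sum.neutral) simp
  then have "sc (c j) * v j \<in> J"
    using insert.prems insert.hyps by simp
  then have "c j = 0" using notin sc_mult_in_J_cancel by blast
  with c_S show ?case by simp
qed

lemma independent_family_not_fin_dim:
  fixes v :: "nat \<Rightarrow> fa"
  assumes in_Yp: "\<And>k. v k \<in> Yp q"
    and independent: "\<And>S c. finite S \<Longrightarrow> (\<Sum>k\<in>S. sc (c k) * v k) \<in> J \<Longrightarrow> \<forall>k\<in>S. c k = 0"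
  shows "\<not> fin_dim_quot q J"
proof
  assume "fin_dim_quot q J"
  then obtain F where F: "finite F" "\<forall>y\<in>Yp q. \<exists>c. y - (\<Sum>f\<in>F. sc (c f) * f) \<in> J"
    unfolding fin_dim_quot_def by blast
  then have "\<forall>k. \<exists>c. v k - (\<Sum>f\<in>F. sc (c f) * f) \<in> J"
    using in_Yp by blast
  then obtain M where M: "\<And>k. v k - (\<Sum>f\<in>F. sc (M k f) * f) \<in> J"
    by metis
  obtain c where c: "\<exists>k\<in>{..card F}. c k \<noteq> 0" "\<forall>f\<in>F. (\<Sum>k\<in>{..card F}. c k * M k f) = 0"
    using exists_nontrivial_vanishing_combination[OF F(1), of "{..card F}" M] by auto
  have "(\<Sum>k\<in>{..card F}. sc (c k) * (\<Sum>f\<in>F. sc (M k f) * f))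
      = (\<Sum>f\<in>F. sc (\<Sum>k\<in>{..card F}. c k * M k f) * f)"
    by (simp add: sum_distrib_left sc_mult_assoc sc_sum sum_distrib_right sum.swap[of _ F])
  then have coordinates_vanish: "(\<Sum>k\<in>{..card F}. sc (c k) * (\<Sum>f\<in>F. sc (M k f) * f)) = 0"
    using c(2) by simp
  have "(\<Sum>k\<in>{..card F}. sc (c k) * v k)
      = (\<Sum>k\<in>{..card F}. sc (c k) * (v k - (\<Sum>f\<in>F. sc (M k f) * f)))
        + (\<Sum>k\<in>{..card F}. sc (c k) * (\<Sum>f\<in>F. sc (M k f) * f))"
    by (simp add: right_diff_distrib sum_subtractf)
  also have "\<dots> = (\<Sum>k\<in>{..card F}. sc (c k) * (v k - (\<Sum>f\<in>F. sc (M k f) * f)))"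
    using coordinates_vanish by simp
  also have "\<dots> \<in> J" by (intro sum_in_J sc_mult_in_J M) auto
  finally show False using independent[of "{..card F}" c] c(1) by blast
qed

end

lemma power_eq_power_imp_eq:
  fixes x :: "'a::field"
  assumes "x \<noteq> 0" and not_root_of_unity: "\<And>n. n > 0 \<Longrightarrow> x ^ n \<noteq> 1" and "x ^ j = x ^ k"
  shows "j = k"
proof -
  have "x ^ j \<noteq> x ^ k" if "j < k" for j k
  proof
    assume "x ^ j = x ^ k"
    also have "x ^ k = x ^ j * x ^ (k - j)"
      using that by (simp flip: power_add)
    finally have "x ^ (k - j) = 1" using \<open>x \<noteq> 0\<close> by simp
    then show False using not_root_of_unity[of "k - j"] that by simp
  qed
  then show ?thesis using \<open>x ^ j = x ^ k\<close> by (metis linorder_neqE_nat)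
qed

locale degenerate_highest_weight = proper_left_ideal +
  fixes b :: complex
  assumes q_nonzero: "q \<noteq> 0"
    and q_not_root_of_unity: "\<And>n. n > 0 \<Longrightarrow> q ^ n \<noteq> 1"
    and s11_in_J: "s0 q I1 I1 \<in> J"
    and s12_weight: "s0 q I1 I2 - sc b \<in> J"
    and s21_in_J: "s0 q I2 I1 \<in> J"
begin

abbreviation \<rho> :: complex where "\<rho> \<equiv> inverse q ^ 2"

definition s11_weight :: "nat \<Rightarrow> complex" where
  "s11_weight k = q ^ 3 * b ^ 2 * \<rho> ^ k * (\<rho> ^ k - 1)"

lemma rho_nonzero: "\<rho> \<noteq> 0"
  using q_nonzero by simp

lemma rho_not_root_of_unity: "n > 0 \<Longrightarrow> \<rho> ^ n \<noteq> 1"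
  using q_not_root_of_unity[of "2 * n"] by (simp add: power_mult power_inverse)

lemma b_nonzero: "b \<noteq> 0"
  using s12_weight_nonzero[OF q_nonzero s12_weight] .

lemma s12_on_s22_power:
  "s0 q I1 I2 * s0 q I2 I2 ^ k - sc (b * \<rho> ^ k) * s0 q I2 I2 ^ k \<in> J"
proof (induction k)
  case 0
  then show ?case using s12_weight by simp
next
  case (Suc k)
  have "s0 q I1 I2 * s0 q I2 I2 ^ Suc k - sc (b * \<rho> ^ Suc k) * s0 q I2 I2 ^ Suc k
      = (s0 q I1 I2 * s0 q I2 I2 - sc \<rho> * (s0 q I2 I2 * s0 q I1 I2)) * s0 q I2 I2 ^ k
        + (sc \<rho> * s0 q I2 I2) * (s0 q I1 I2 * s0 q I2 I2 ^ k - sc (b * \<rho> ^ k) * s0 q I2 I2 ^ k)"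
    by (simp add: algebra_simps sc_left_commute[of "s0 q I2 I2"] sc_mult_assoc)
  also have "\<dots> \<in> J"
    using q_nonzero
    by (intro add_in_J Rel_mult_in_J s12_s22_relation mult_in_J sc_mult_in_Yp scoef_in_Yp Suc)
  finally show ?case .
qed

lemma s21_on_s22_power:
  "s0 q I2 I1 * s0 q I2 I2 ^ k - sc (q * b * (\<rho> ^ k - 1)) * s0 q I2 I2 ^ k \<in> J"
proof (induction k)
  case 0
  then show ?case using s21_in_J by simp
next
  case (Suc k)
  have "q * b * (\<rho> ^ Suc k - 1) = q * b * (\<rho> ^ k - 1) + (inverse q - q) * (b * \<rho> ^ k)"
    using q_nonzero by (simp add: field_simps power2_eq_square)
  then have weight_step: "sc (q * b * (\<rho> ^ Suc k - 1))
      = sc (q * b * (\<rho> ^ k - 1)) + sc (inverse q - q) * sc (b * \<rho> ^ k)"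
    by (simp only: sc_mult sc_add[symmetric])
  have "s0 q I2 I1 * s0 q I2 I2 ^ Suc k - sc (q * b * (\<rho> ^ Suc k - 1)) * s0 q I2 I2 ^ Suc k
      = (s0 q I2 I1 * s0 q I2 I2 - s0 q I2 I2 * s0 q I2 I1
          - sc (inverse q - q) * (s0 q I2 I2 * s0 q I1 I2)) * s0 q I2 I2 ^ k
        + s0 q I2 I2 * (s0 q I2 I1 * s0 q I2 I2 ^ k - sc (q * b * (\<rho> ^ k - 1)) * s0 q I2 I2 ^ k)
        + (sc (inverse q - q) * s0 q I2 I2)
          * (s0 q I1 I2 * s0 q I2 I2 ^ k - sc (b * \<rho> ^ k) * s0 q I2 I2 ^ k)"
    unfolding weight_step by (simp add: algebra_simps sc_left_commute[of "s0 q I2 I2"])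
  also have "\<dots> \<in> J"
    using q_nonzero
    by (intro add_in_J Rel_mult_in_J s21_s22_relation mult_in_J sc_mult_in_Yp scoef_in_Yp Suc
        s12_on_s22_power)
  finally show ?case .
qed

lemma s11_s22_power_step:
  assumes "s0 q I2 I2 * (s0 q I1 I1 * s0 q I2 I2 ^ k) - sc (s11_weight k) * s0 q I2 I2 ^ k \<in> J"
  shows "s0 q I1 I1 * s0 q I2 I2 ^ Suc k - sc (s11_weight (Suc k)) * s0 q I2 I2 ^ k \<in> J"
proof -
  have "q ^ 3 * b ^ 2 * (r ^ 2 * x) * (r ^ 2 * x - 1) = q ^ 3 * b ^ 2 * x * (x - 1)
      + (1 - q ^ 2) * (b * x * (q * b * (x - 1)) + r * (b * x * (b * x)))"
    if "q * r = 1" for r x :: complex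
    using that by algebra
  from this[of "inverse q" "\<rho> ^ k"]
  have "s11_weight (Suc k) = s11_weight k
      + (1 - q ^ 2) * (b * \<rho> ^ k * (q * b * (\<rho> ^ k - 1)) + inverse q * (b * \<rho> ^ k * (b * \<rho> ^ k)))"
    using q_nonzero by (simp add: s11_weight_def)
  then have weight_step: "sc (s11_weight (Suc k)) = sc (s11_weight k)
      + sc (1 - q ^ 2) * (sc (b * \<rho> ^ k) * sc (q * b * (\<rho> ^ k - 1))
        + sc (inverse q) * (sc (b * \<rho> ^ k) * sc (b * \<rho> ^ k)))"
    by (simp only: sc_mult sc_add[symmetric])
  have "s0 q I1 I1 * s0 q I2 I2 ^ Suc k - sc (s11_weight (Suc k)) * s0 q I2 I2 ^ k
      = (s0 q I1 I1 * s0 q I2 I2 - s0 q I2 I2 * s0 q I1 I1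
          - sc (1 - q ^ 2) * (s0 q I2 I1 * s0 q I1 I2 + sc (inverse q) * (s0 q I1 I2 * s0 q I1 I2)))
          * s0 q I2 I2 ^ k
        + (s0 q I2 I2 * (s0 q I1 I1 * s0 q I2 I2 ^ k) - sc (s11_weight k) * s0 q I2 I2 ^ k)
        + sc (1 - q ^ 2) *
          (s0 q I2 I1 * (s0 q I1 I2 * s0 q I2 I2 ^ k - sc (b * \<rho> ^ k) * s0 q I2 I2 ^ k)
           + sc (b * \<rho> ^ k)
             * (s0 q I2 I1 * s0 q I2 I2 ^ k - sc (q * b * (\<rho> ^ k - 1)) * s0 q I2 I2 ^ k)
           + sc (inverse q) *
             (s0 q I1 I2 * (s0 q I1 I2 * s0 q I2 I2 ^ k - sc (b * \<rho> ^ k) * s0 q I2 I2 ^ k)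
              + sc (b * \<rho> ^ k)
                * (s0 q I1 I2 * s0 q I2 I2 ^ k - sc (b * \<rho> ^ k) * s0 q I2 I2 ^ k)))"
    unfolding weight_step
    by (simp add: algebra_simps sc_left_commute[of "s0 q I1 I2"] sc_left_commute[of "s0 q I2 I1"]
        sc_left_commute[of "s0 q I2 I2"] sc_mult_assoc)
  also have "\<dots> \<in> J"
    using q_nonzero
    by (intro add_in_J Rel_mult_in_J s11_s22_relation assms sc_mult_in_J mult_in_J scoef_in_Yp
        s12_on_s22_power s21_on_s22_power)
  finally show ?thesis .
qed

lemma s11_on_s22_power:
  "s0 q I1 I1 * s0 q I2 I2 ^ Suc k - sc (s11_weight (Suc k)) * s0 q I2 I2 ^ k \<in> J"
proof (induction k)
  case 0
  have "s0 q I2 I2 * s0 q I1 I1 \<in> J"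
    by (rule mult_in_J[OF scoef_in_Yp s11_in_J])
  then show ?case
    by (intro s11_s22_power_step) (simp add: s11_weight_def)
next
  case (Suc k)
  have "s0 q I2 I2 * (s0 q I1 I1 * s0 q I2 I2 ^ Suc k - sc (s11_weight (Suc k)) * s0 q I2 I2 ^ k) \<in> J"
    by (rule mult_in_J[OF scoef_in_Yp Suc.IH])
  then show ?case
    by (intro s11_s22_power_step) (simp add: algebra_simps sc_left_commute[of "s0 q I2 I2"])
qed

lemma s11_weight_nonzero: "k > 0 \<Longrightarrow> s11_weight k \<noteq> 0"
  using q_nonzero b_nonzero rho_nonzero rho_not_root_of_unity by (simp add: s11_weight_def)

lemma s22_power_notin_J: "s0 q I2 I2 ^ k \<notin> J"
proof (induction k)
  case 0
  then show ?case using one_notin_J by simp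
next
  case (Suc k)
  show ?case
  proof
    assume "s0 q I2 I2 ^ Suc k \<in> J"
    then have "s0 q I1 I1 * s0 q I2 I2 ^ Suc k \<in> J"
      by (rule mult_in_J[OF scoef_in_Yp])
    then have "s0 q I1 I1 * s0 q I2 I2 ^ Suc k
        - (s0 q I1 I1 * s0 q I2 I2 ^ Suc k - sc (s11_weight (Suc k)) * s0 q I2 I2 ^ k) \<in> J"
      using s11_on_s22_power by (rule diff_in_J)
    then have "s0 q I2 I2 ^ k \<in> J"
      using s11_weight_nonzero[of "Suc k"] sc_mult_in_J_cancel by simp
    with Suc.IH show False ..
  qed
qed

lemma not_fin_dim_quot: "\<not> fin_dim_quot q J"
proof (rule independent_family_not_fin_dim)
  show "s0 q I2 I2 ^ k \<in> Yp q" for k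
    by (intro power_in_Yp scoef_in_Yp)
  have "inj (\<lambda>k. b * \<rho> ^ k)"
    using power_eq_power_imp_eq[OF rho_nonzero rho_not_root_of_unity] b_nonzero by (auto intro: injI)
  then show "(\<Sum>k\<in>S. sc (c k) * s0 q I2 I2 ^ k) \<in> J \<Longrightarrow> \<forall>k\<in>S. c k = 0" if "finite S" for S c
    using that by (intro eigenvectors_independent[OF scoef_in_Yp s22_power_notin_J s12_on_s22_power])
qed

end

theorem proposition4p3:
  fixes q :: complex and mu mub :: "nat \<Rightarrow> complex" and J :: "fa set"
  assumes "q \<noteq> 0"
    and "\<forall>n::nat. n > 0 \<longrightarrow> q ^ n \<noteq> 1"
    and "irr_ideal q mu mub J"
    and "fin_dim_quot q J"
  shows "mu 0 \<noteq> 0 \<and> mub 0 \<noteq> 0"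
proof -
  have verma: "verma_gens q mu mub \<subseteq> J" and proper: "proper_left_ideal q J"
    using assms(3) by (auto simp: irr_ideal_def proper_left_ideal_def)
  then have weight: "s0 q I1 I2 - sc (- q * mub 0) \<in> J"
    using assms(1) proper_left_ideal.s12_weight_of_verma by blast
  then have "mub 0 \<noteq> 0"
    using assms(1) proper proper_left_ideal.s12_weight_nonzero by fastforce
  moreover have "mu 0 \<noteq> 0"
  proof
    assume "mu 0 = 0"
    moreover have "s0 q I2 I1 - sc (mu 0) \<in> J"
      using verma unfolding verma_gens_def by blast
    ultimately have "degenerate_highest_weight q J (- q * mub 0)"
      using proper assms(1,2) weight verma
      by (auto simp: degenerate_highest_weight_def degenerate_highest_weight_axioms_def verma_gens_def)
    then show False
      using assms(4) degenerate_highest_weight.not_fin_dim_quot by blast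
  qed
  ultimately show ?thesis by simp
qed

end
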